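(* For every positive integer $n$, there exists a semigroup $S$ with a left ideal $A$ such that $\mathrm{H}_{\mathcal{R}}(S)=n$ and $\mathrm{H}_{\mathcal{R}}(A)=2n$.
   Context: A left ideal of $S$ is a non-empty subset $A$ with $SA\subseteq A$. Green's preorder on a semigroup $M$: $u\leq_{\mathcal{R}} v$ iff $uM^1\subseteq vM^1$, where $M^1$ is $M$ with an identity adjoined if necessary; $\mathcal{R}$ is the associated equivalence; the $\mathcal{R}$-height $\mathrm{H}_{\mathcal{R}}(M)$ is the supremum of the cardinalities of chains in the poset of $\mathcal{R}$-classes. $\mathrm{H}_{\mathcal{R}}(A)$ is computed in $A$ as a semigroup. *)

theory Defs
  imports Main "HOL-Library.Extended_Nat"
begin

definition semigroup_on :: "'a set \<Rightarrow> ('a \<Rightarrow> 'a \<Rightarrow> 'a) \<Rightarrow> bool" where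
  "semigroup_on M f \<longleftrightarrow>
     (\<forall>x\<in>M. \<forall>y\<in>M. f x y \<in> M) \<and>
     (\<forall>x\<in>M. \<forall>y\<in>M. \<forall>z\<in>M. f (f x y) z = f x (f y z))"

definition left_ideal :: "'a set \<Rightarrow> ('a \<Rightarrow> 'a \<Rightarrow> 'a) \<Rightarrow> 'a set \<Rightarrow> bool" where
  "left_ideal S f A \<longleftrightarrow> A \<noteq> {} \<and> A \<subseteq> S \<and> (\<forall>s\<in>S. \<forall>a\<in>A. f s a \<in> A)"

definition right_principal :: "'a set \<Rightarrow> ('a \<Rightarrow> 'a \<Rightarrow> 'a) \<Rightarrow> 'a \<Rightarrow> 'a set" where
  "right_principal M f u = insert u (f u ` M)"

definition R_le :: "'a set \<Rightarrow> ('a \<Rightarrow> 'a \<Rightarrow> 'a) \<Rightarrow> 'a \<Rightarrow> 'a \<Rightarrow> bool" where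
  "R_le M f u v \<longleftrightarrow> u \<in> M \<and> v \<in> M \<and> right_principal M f u \<subseteq> right_principal M f v"

definition R_class :: "'a set \<Rightarrow> ('a \<Rightarrow> 'a \<Rightarrow> 'a) \<Rightarrow> 'a \<Rightarrow> 'a set" where
  "R_class M f u = {v \<in> M. R_le M f u v \<and> R_le M f v u}"

definition R_classes :: "'a set \<Rightarrow> ('a \<Rightarrow> 'a \<Rightarrow> 'a) \<Rightarrow> 'a set set" where
  "R_classes M f = R_class M f ` M"

definition R_class_le :: "'a set \<Rightarrow> ('a \<Rightarrow> 'a \<Rightarrow> 'a) \<Rightarrow> 'a set \<Rightarrow> 'a set \<Rightarrow> bool" where
  "R_class_le M f X Y \<longleftrightarrow> (\<exists>u\<in>X. \<exists>v\<in>Y. R_le M f u v)"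

definition R_chain :: "'a set \<Rightarrow> ('a \<Rightarrow> 'a \<Rightarrow> 'a) \<Rightarrow> 'a set set \<Rightarrow> bool" where
  "R_chain M f K \<longleftrightarrow> K \<subseteq> R_classes M f \<and>
     (\<forall>X\<in>K. \<forall>Y\<in>K. R_class_le M f X Y \<or> R_class_le M f Y X)"

definition R_height :: "'a set \<Rightarrow> ('a \<Rightarrow> 'a \<Rightarrow> 'a) \<Rightarrow> enat" where
  "R_height M f = Sup ((\<lambda>K. if finite K then enat (card K) else \<infinity>) ` {K. R_chain M f K})"

end

(* Let T be a countable right simple semigroup with an element a that is not in T a; a countable
   subsemigroup of the Baer-Levi semigroup of injections of nat with infinite co-range will do.
   Stack n copies of T x {0, 1}, the flags forming a right zero band, so that lower levels absorb
   higher ones: the principal right ideal of an element is everything at or below its level, and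
   the R-height is n.  In the left ideal of elements whose flag is 1 only when the T-component lies
   in T^1 a, the element (a, 1, k) is no longer a right multiple of the rest of level k, because no
   product x y with y in T^1 a equals a.  So every level splits into two R-classes and the height
   doubles.  The example is finally copied to nat along an injection. *)

theory Submission
  imports Defs "HOL-Library.Countable_Set"
begin

section \<open>Heights from rank functions\<close>

lemma right_principal_memI: "w \<in> M \<Longrightarrow> f u w = v \<Longrightarrow> v \<in> right_principal M f u"
  by (auto simp: right_principal_def)

lemma R_height_eq_card_R_classes:
  assumes fin: "finite (R_classes M f)" and chain: "R_chain M f (R_classes M f)"
  shows "R_height M f = enat (card (R_classes M f))"
  unfolding R_height_def
proof (rule Sup_eqI)
  fix c assume "c \<in> (\<lambda>K. if finite K then enat (card K) else \<infinity>) ` {K. R_chain M f K}"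
  then obtain K where "R_chain M f K" and c: "c = (if finite K then enat (card K) else \<infinity>)"
    by blast
  then have "K \<subseteq> R_classes M f" by (simp add: R_chain_def)
  with fin show "c \<le> enat (card (R_classes M f))"
    by (simp add: c finite_subset card_mono)
next
  fix b
  assume "\<And>c. c \<in> (\<lambda>K. if finite K then enat (card K) else \<infinity>) ` {K. R_chain M f K} \<Longrightarrow> c \<le> b"
  from this[of "enat (card (R_classes M f))"] show "enat (card (R_classes M f)) \<le> b"
    using fin chain by force
qed

definition R_rank :: "'a set \<Rightarrow> ('a \<Rightarrow> 'a \<Rightarrow> 'a) \<Rightarrow> ('a \<Rightarrow> nat) \<Rightarrow> bool" where
  "R_rank M f rk \<longleftrightarrow> (\<forall>u\<in>M. right_principal M f u = {v \<in> M. rk v \<le> rk u})"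

lemma R_le_iff_rank_le:
  assumes rk: "R_rank M f rk" and "u \<in> M" "v \<in> M"
  shows "R_le M f u v \<longleftrightarrow> rk u \<le> rk v"
proof -
  have "u \<in> right_principal M f u" by (simp add: right_principal_def)
  then show ?thesis
    using rk assms(2,3) by (auto simp: R_rank_def R_le_def)
qed

lemma R_class_eq_rank_fibre:
  assumes "R_rank M f rk" "u \<in> M"
  shows "R_class M f u = {v \<in> M. rk v = rk u}"
  using R_le_iff_rank_le[OF assms(1)] assms(2) by (auto simp: R_class_def)

lemma R_height_eq_card_rank_image:
  assumes rk: "R_rank M f rk" and fin: "finite (rk ` M)"
  shows "R_height M f = enat (card (rk ` M))"
proof -
  define fibre where "fibre i = {v \<in> M. rk v = i}" for i
  have classes: "R_classes M f = fibre ` rk ` M"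
    using R_class_eq_rank_fibre[OF rk] by (force simp: R_classes_def fibre_def)
  have "inj_on fibre (rk ` M)"
    by (auto simp: inj_on_def fibre_def)
  then have card: "card (R_classes M f) = card (rk ` M)"
    by (simp add: classes card_image)
  have "R_chain M f (R_classes M f)"
    unfolding R_chain_def
  proof (intro conjI ballI)
    fix X Y assume "X \<in> R_classes M f" "Y \<in> R_classes M f"
    then obtain u v where uv: "u \<in> M" "v \<in> M" "X = R_class M f u" "Y = R_class M f v"
      by (auto simp: R_classes_def)
    then have "u \<in> X" "v \<in> Y"
      using R_class_eq_rank_fibre[OF rk] by auto
    moreover have "R_le M f u v \<or> R_le M f v u"
      using R_le_iff_rank_le[OF rk uv(1,2)] R_le_iff_rank_le[OF rk uv(2,1)] by linarith
    ultimately show "R_class_le M f X Y \<or> R_class_le M f Y X"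
      unfolding R_class_le_def by blast
  qed simp
  moreover have "finite (R_classes M f)"
    using classes fin by simp
  ultimately show ?thesis
    using R_height_eq_card_R_classes card by metis
qed

section \<open>Transport along an injection\<close>

definition induced_op :: "'a set \<Rightarrow> ('a \<Rightarrow> 'b) \<Rightarrow> ('a \<Rightarrow> 'a \<Rightarrow> 'a) \<Rightarrow> 'b \<Rightarrow> 'b \<Rightarrow> 'b" where
  "induced_op M h f x y = h (f (inv_into M h x) (inv_into M h y))"

lemma induced_op_image [simp]:
  assumes "inj_on h M" "u \<in> M" "v \<in> M"
  shows "induced_op M h f (h u) (h v) = h (f u v)"
  using assms by (simp add: induced_op_def)

lemma semigroup_on_induced:
  assumes "semigroup_on M f" "inj_on h M"
  shows "semigroup_on (h ` M) (induced_op M h f)"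
  using assms by (auto simp: semigroup_on_def)

lemma left_ideal_induced:
  assumes "left_ideal M f A" "inj_on h M"
  shows "left_ideal (h ` M) (induced_op M h f) (h ` A)"
  using assms by (auto simp: left_ideal_def subsetD)

lemma right_principal_induced:
  assumes "A \<subseteq> M" "inj_on h M" "u \<in> A"
  shows "right_principal (h ` A) (induced_op M h f) (h u) = h ` right_principal A f u"
  using assms by (auto simp: right_principal_def subsetD image_iff)

lemma R_height_induced:
  assumes sub: "A \<subseteq> M" and inj: "inj_on h M"
    and rk: "R_rank A f rk" and fin: "finite (rk ` A)"
  shows "R_height (h ` A) (induced_op M h f) = enat (card (rk ` A))"
proof -
  let ?rk = "rk \<circ> inv_into M h"
  have rk_h: "?rk (h u) = rk u" if "u \<in> A" for u
    using that sub inj by (auto simp: subsetD)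
  then have image: "?rk ` h ` A = rk ` A"
    by (force simp: image_iff)
  have "R_rank (h ` A) (induced_op M h f) ?rk"
    unfolding R_rank_def
  proof
    fix u' assume "u' \<in> h ` A"
    then obtain u where u: "u \<in> A" "u' = h u" by blast
    have "right_principal (h ` A) (induced_op M h f) u' = h ` {v \<in> A. rk v \<le> rk u}"
      using right_principal_induced[OF sub inj u(1)] rk u by (simp add: R_rank_def)
    also have "\<dots> = {v \<in> h ` A. ?rk v \<le> ?rk u'}"
      using rk_h u by auto
    finally show "right_principal (h ` A) (induced_op M h f) u' = {v \<in> h ` A. ?rk v \<le> ?rk u'}" .
  qed
  then show ?thesis
    using R_height_eq_card_rank_image fin image by metis
qed

section \<open>Countable right simple subsemigroups\<close>

lemma countable_right_simple_subsemigroup: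
  assumes sg: "semigroup_on M f"
    and right_simple: "\<And>x y. x \<in> M \<Longrightarrow> y \<in> M \<Longrightarrow> \<exists>t\<in>M. f x t = y"
    and "a \<in> M"
  obtains T where "a \<in> T" "T \<subseteq> M" "countable T" "semigroup_on T f"
    "\<And>x y. x \<in> T \<Longrightarrow> y \<in> T \<Longrightarrow> \<exists>t\<in>T. f x t = y"
proof -
  define quot where "quot x y = (SOME t. t \<in> M \<and> f x t = y)" for x y
  have quot: "quot x y \<in> M \<and> f x (quot x y) = y" if "x \<in> M" "y \<in> M" for x y
    unfolding quot_def using right_simple[OF that] by (rule someI2_bex) simp
  define step where "step C = C \<union> case_prod f ` (C \<times> C) \<union> case_prod quot ` (C \<times> C)" for C
  define H where "H k = (step ^^ k) {a}" for k
  have H_Suc: "H (Suc k) = step (H k)" for k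
    by (simp add: H_def)
  have H_mono: "H i \<subseteq> H j" if "i \<le> j" for i j
    using lift_Suc_mono_le[of H, OF _ that] by (auto simp: H_Suc step_def)
  have H_M: "H k \<subseteq> M" for k
  proof (induction k)
    case 0
    then show ?case using \<open>a \<in> M\<close> by (simp add: H_def)
  next
    case (Suc k)
    have "f x y \<in> M" "quot x y \<in> M" if "x \<in> M" "y \<in> M" for x y
      using sg quot[OF that] that by (auto simp: semigroup_on_def)
    with Suc show ?case
      by (auto simp: H_Suc step_def subset_iff)
  qed
  have H_finite: "finite (H k)" for k
    by (induction k) (simp_all add: H_def step_def)
  define T where "T = (\<Union>k. H k)"
  have closed: "f x y \<in> T \<and> quot x y \<in> T" if xy: "x \<in> T" "y \<in> T" for x y
  proof -
    obtain i j where "x \<in> H i" "y \<in> H j"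
      using xy unfolding T_def by blast
    then have "x \<in> H (max i j)" "y \<in> H (max i j)"
      using H_mono[of i "max i j"] H_mono[of j "max i j"] by auto
    then have "f x y \<in> H (Suc (max i j)) \<and> quot x y \<in> H (Suc (max i j))"
      by (force simp: H_Suc step_def)
    then show ?thesis by (auto simp: T_def)
  qed
  have "T \<subseteq> M"
    using H_M by (auto simp: T_def)
  show thesis
  proof
    show "a \<in> T"
      by (auto simp: T_def H_def intro: exI[of _ 0])
    show "T \<subseteq> M" by fact
    show "countable T"
      by (auto simp: T_def intro: countable_finite H_finite)
    show "semigroup_on T f"
      using sg closed \<open>T \<subseteq> M\<close> by (auto simp: semigroup_on_def subsetD)
    show "\<exists>t\<in>T. f x t = y" if "x \<in> T" "y \<in> T" for x y
      using closed[OF that] quot \<open>T \<subseteq> M\<close> that by blast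
  qed
qed

section \<open>The Baer--Levi semigroup\<close>

definition baer_levi :: "(nat \<Rightarrow> nat) set" where
  "baer_levi = {f. inj f \<and> infinite (- range f)}"

lemma comp_mem_baer_levi:
  assumes "f \<in> baer_levi" "g \<in> baer_levi"
  shows "g \<circ> f \<in> baer_levi"
proof -
  have "- range g \<subseteq> - range (g \<circ> f)" by auto
  moreover have "infinite (- range g)"
    using assms(2) by (simp add: baer_levi_def)
  ultimately have "infinite (- range (g \<circ> f))"
    by (rule infinite_super)
  then show ?thesis
    using assms by (simp add: baer_levi_def inj_compose)
qed

lemma semigroup_on_baer_levi: "semigroup_on baer_levi (\<lambda>x y. y \<circ> x)"
  by (simp add: semigroup_on_def comp_mem_baer_levi comp_assoc)

lemma baer_levi_right_simple:
  assumes u: "u \<in> baer_levi" and v: "v \<in> baer_levi"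
  shows "\<exists>s\<in>baer_levi. s \<circ> u = v"
proof -
  have "inj u" "inj v" "infinite (- range v)"
    using u v by (auto simp: baer_levi_def)
  then obtain e :: "nat \<Rightarrow> nat" where e: "inj e" "range e \<subseteq> - range v"
    by (meson infinite_countable_subset)
  define s where "s y = (if y \<in> range u then v (inv u y) else e y)" for y
  have "inj_on s (range u)"
    using \<open>inj v\<close> by (auto simp: inj_on_def s_def inv_f_f[OF \<open>inj u\<close>])
  moreover have "inj_on s (- range u)"
    using \<open>inj e\<close> by (auto simp: inj_on_def s_def)
  moreover have "s ` range u \<inter> s ` (- range u) = {}"
    using e(2) by (auto simp: s_def)
  ultimately have "inj s"
    using inj_on_Un[of s "range u" "- range u"] by (simp add: Diff_eq)
  have "e ` range u \<subseteq> - range s"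
    using e \<open>inj e\<close> by (auto simp: s_def inj_eq)
  moreover have "infinite (e ` range u)"
  proof
    assume "finite (e ` range u)"
    then have "finite (range u)"
      using \<open>inj e\<close> by (simp add: finite_image_iff inj_on_subset)
    then show False
      using range_inj_infinite[OF \<open>inj u\<close>] by blast
  qed
  ultimately have "infinite (- range s)"
    by (rule infinite_super)
  moreover have "s \<circ> u = v"
    using \<open>inj u\<close> by (auto simp: s_def)
  ultimately show ?thesis
    using \<open>inj s\<close> by (auto simp: baer_levi_def)
qed

lemma comp_baer_levi_neq:
  assumes "a \<in> baer_levi" "t \<in> baer_levi"
  shows "a \<circ> t \<noteq> a"
proof
  assume "a \<circ> t = a"
  then have "t = id"
    using assms(1) by (auto simp: baer_levi_def inj_def fun_eq_iff)
  then show False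
    using assms(2) by (simp add: baer_levi_def)
qed

lemma double_mem_baer_levi: "(*) (2::nat) \<in> baer_levi"
proof -
  have "range (\<lambda>k. 2 * k + 1) \<subseteq> - range ((*) (2::nat))"
    by auto presburger
  moreover have "infinite (range (\<lambda>k::nat. 2 * k + 1))"
    by (rule range_inj_infinite) (auto simp: inj_def)
  ultimately have "infinite (- range ((*) (2::nat)))"
    by (rule infinite_super)
  then show ?thesis
    by (simp add: baer_levi_def inj_def)
qed

section \<open>The layered semigroup\<close>

definition left_principal :: "'a set \<Rightarrow> ('a \<Rightarrow> 'a \<Rightarrow> 'a) \<Rightarrow> 'a \<Rightarrow> 'a set" where
  "left_principal M f u = insert u ((\<lambda>t. f t u) ` M)"

lemma mult_left_principal:
  assumes sg: "semigroup_on M f" and "u \<in> M" "t \<in> M" "y \<in> left_principal M f u"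
  shows "f t y \<in> (\<lambda>s. f s u) ` M"
proof -
  from assms(4) consider "y = u" | s where "s \<in> M" "y = f s u"
    by (auto simp: left_principal_def)
  then show ?thesis
  proof cases
    case 1
    then show ?thesis using \<open>t \<in> M\<close> by simp
  next
    case 2
    then have "f t y = f (f t s) u" and "f t s \<in> M"
      using sg \<open>u \<in> M\<close> \<open>t \<in> M\<close> by (simp_all add: semigroup_on_def)
    then show ?thesis by blast
  qed
qed

text \<open>Dropping the flag when the left factor lies on a strictly lower level is what makes the
  flag condition of \<open>flag_ideal\<close> below stable under left multiplication.\<close>

fun level_mult :: "('a \<Rightarrow> 'a \<Rightarrow> 'a) \<Rightarrow> 'a \<times> bool \<times> nat \<Rightarrow> 'a \<times> bool \<times> nat \<Rightarrow> 'a \<times> bool \<times> nat" where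
  "level_mult g (x, r, k) (y, s, l) =
     (if k = l then (g x y, s, k) else if k < l then (x, False, k) else (y, s, l))"

locale pointed_right_simple_semigroup =
  fixes T :: "'a set" and mult :: "'a \<Rightarrow> 'a \<Rightarrow> 'a" and a :: 'a
  assumes semigroup: "semigroup_on T mult"
    and right_simple: "\<And>x y. x \<in> T \<Longrightarrow> y \<in> T \<Longrightarrow> \<exists>t\<in>T. mult x t = y"
    and a_mem: "a \<in> T"
    and a_notin_left_multiples: "\<And>t. t \<in> T \<Longrightarrow> mult t a \<noteq> a"
begin

lemma mult_closed: "x \<in> T \<Longrightarrow> y \<in> T \<Longrightarrow> mult x y \<in> T"
  and mult_assoc: "x \<in> T \<Longrightarrow> y \<in> T \<Longrightarrow> z \<in> T \<Longrightarrow> mult (mult x y) z = mult x (mult y z)"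
  using semigroup by (auto simp: semigroup_on_def)

abbreviation La :: "'a set" where
  "La \<equiv> left_principal T mult a"

lemma La_subset: "La \<subseteq> T"
  using a_mem by (auto simp: left_principal_def mult_closed)

lemma mult_La_neq_a:
  assumes "x \<in> T" "y \<in> La"
  shows "mult x y \<noteq> a"
proof
  assume "mult x y = a"
  moreover obtain s where "s \<in> T" "mult x y = mult s a"
    using mult_left_principal[OF semigroup a_mem assms] by blast
  ultimately show False
    using a_notin_left_multiples by metis
qed

lemma La_right_divisible:
  assumes "x \<in> T" "y \<in> La" "y \<noteq> a"
  obtains z where "z \<in> La" "mult x z = y"
proof -
  obtain t0 where t0: "t0 \<in> T" "y = mult t0 a"
    using assms(2,3) by (auto simp: left_principal_def)
  obtain t where "t \<in> T" "mult x t = t0"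
    using right_simple[OF assms(1) t0(1)] by blast
  then show thesis
    using that[of "mult t a"] t0 assms(1) a_mem
    by (auto simp: left_principal_def mult_assoc)
qed

definition levels :: "nat \<Rightarrow> ('a \<times> bool \<times> nat) set" where
  "levels n = T \<times> UNIV \<times> {1..n}"

definition flag_ideal :: "nat \<Rightarrow> ('a \<times> bool \<times> nat) set" where
  "flag_ideal n = {(x, r, k) \<in> levels n. r \<longrightarrow> x \<in> La}"

lemma mem_levels [simp]: "(x, r, k) \<in> levels n \<longleftrightarrow> x \<in> T \<and> 1 \<le> k \<and> k \<le> n"
  by (simp add: levels_def)

lemma mem_flag_ideal [simp]: "(x, r, k) \<in> flag_ideal n \<longleftrightarrow> (x, r, k) \<in> levels n \<and> (r \<longrightarrow> x \<in> La)"
  by (simp add: flag_ideal_def)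

lemma semigroup_levels: "semigroup_on (levels n) (level_mult mult)"
  unfolding semigroup_on_def
  by (auto simp: levels_def mult_closed mult_assoc)

lemma flag_ideal_subset: "flag_ideal n \<subseteq> levels n"
  by (auto simp: flag_ideal_def)

lemma level_mult_mem_flag_ideal:
  assumes "u \<in> levels n" "w \<in> flag_ideal n"
  shows "level_mult mult u w \<in> flag_ideal n"
proof -
  obtain y s l where u: "u = (y, s, l)" by (cases u)
  obtain x r k where w: "w = (x, r, k)" by (cases w)
  have "y \<in> T" "x \<in> T" "r \<longrightarrow> x \<in> La"
    using assms by (auto simp: u w)
  then have "r \<longrightarrow> mult y x \<in> La"
    using mult_left_principal[OF semigroup a_mem] by (auto simp: left_principal_def)
  then show ?thesis
    using assms \<open>y \<in> T\<close> \<open>x \<in> T\<close> by (auto simp: u w mult_closed)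
qed

lemma left_ideal_flag_ideal:
  assumes "n > 0"
  shows "left_ideal (levels n) (level_mult mult) (flag_ideal n)"
proof -
  have "(a, False, 1) \<in> flag_ideal n"
    using assms a_mem by simp
  then show ?thesis
    unfolding left_ideal_def using flag_ideal_subset level_mult_mem_flag_ideal by blast
qed

lemma right_principal_levels:
  assumes u: "(x, r, k) \<in> levels n"
  shows "right_principal (levels n) (level_mult mult) (x, r, k) = {v \<in> levels n. (\<lambda>(y, s, l). l) v \<le> k}"
proof (intro equalityI subsetI)
  fix v assume "v \<in> right_principal (levels n) (level_mult mult) (x, r, k)"
  then consider "v = (x, r, k)" | w where "w \<in> levels n" "v = level_mult mult (x, r, k) w"
    by (auto simp: right_principal_def)
  then show "v \<in> {v \<in> levels n. (\<lambda>(y, s, l). l) v \<le> k}"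
  proof cases
    case 1
    then show ?thesis using u by simp
  next
    case 2
    then have "v \<in> levels n"
      using u semigroup_levels by (simp add: semigroup_on_def)
    moreover have "(\<lambda>(y, s, l). l) v \<le> k"
      using 2 by (cases w) auto
    ultimately show ?thesis by simp
  qed
next
  fix v assume "v \<in> {v \<in> levels n. (\<lambda>(y, s, l). l) v \<le> k}"
  then obtain y s l where v: "v = (y, s, l)" "v \<in> levels n" "l \<le> k"
    by (cases v) auto
  show "v \<in> right_principal (levels n) (level_mult mult) (x, r, k)"
  proof (cases "l = k")
    case True
    obtain t where "t \<in> T" "mult x t = y"
      using right_simple v u by auto
    then have "level_mult mult (x, r, k) (t, s, k) = v" "(t, s, k) \<in> levels n"
      using True v u by auto
    then show ?thesis
      by (blast intro: right_principal_memI)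
  next
    case False
    then have "level_mult mult (x, r, k) v = v"
      using v by simp
    then show ?thesis
      using v by (blast intro: right_principal_memI)
  qed
qed

lemma R_rank_levels: "R_rank (levels n) (level_mult mult) (\<lambda>(x, r, k). k)"
  unfolding R_rank_def
proof
  fix u assume "u \<in> levels n"
  then show "right_principal (levels n) (level_mult mult) u
      = {v \<in> levels n. (\<lambda>(x, r, k). k) v \<le> (\<lambda>(x, r, k). k) u}"
    by (cases u) (simp add: right_principal_levels)
qed

fun flag_rank :: "'a \<times> bool \<times> nat \<Rightarrow> nat" where
  "flag_rank (x, r, k) = 2 * k + (if r \<and> x = a then 1 else 0)"

lemma right_principal_flag_ideal:
  assumes u: "(x, r, k) \<in> flag_ideal n"
  shows "right_principal (flag_ideal n) (level_mult mult) (x, r, k)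
      = {v \<in> flag_ideal n. flag_rank v \<le> flag_rank (x, r, k)}"
proof (intro equalityI subsetI)
  fix v assume "v \<in> right_principal (flag_ideal n) (level_mult mult) (x, r, k)"
  then consider "v = (x, r, k)" | w where "w \<in> flag_ideal n" "v = level_mult mult (x, r, k) w"
    by (auto simp: right_principal_def)
  then show "v \<in> {v \<in> flag_ideal n. flag_rank v \<le> flag_rank (x, r, k)}"
  proof cases
    case 1
    then show ?thesis using u by simp
  next
    case 2
    obtain z q m where w: "w = (z, q, m)" by (cases w)
    have "v \<in> flag_ideal n"
      using 2 u flag_ideal_subset level_mult_mem_flag_ideal by blast
    moreover have "flag_rank v \<le> flag_rank (x, r, k)"
      using 2 u mult_La_neq_a by (auto simp: w)
    ultimately show ?thesis by simp
  qed
next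
  fix v assume "v \<in> {v \<in> flag_ideal n. flag_rank v \<le> flag_rank (x, r, k)}"
  then obtain y s l where v: "v = (y, s, l)" "v \<in> flag_ideal n"
    and rank: "flag_rank v \<le> flag_rank (x, r, k)"
    by (cases v) auto
  then have "l \<le> k"
    by (auto split: if_splits)
  show "v \<in> right_principal (flag_ideal n) (level_mult mult) (x, r, k)"
  proof (cases "l = k")
    case True
    show ?thesis
    proof (cases "s \<and> y = a")
      case True
      then have "v = (x, r, k)"
        using rank v \<open>l = k\<close> by (auto split: if_splits)
      then show ?thesis
        by (simp add: right_principal_def)
    next
      case False
      obtain z where z: "s \<longrightarrow> z \<in> La" "z \<in> T" "mult x z = y"
      proof (cases s)
        case True
        then obtain z where "z \<in> La" "mult x z = y"
          using La_right_divisible[of x y] False v u by auto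
        then show thesis
          using that La_subset by auto
      next
        case False
        then show thesis
          using right_simple v u that by auto
      qed
      then have "level_mult mult (x, r, k) (z, s, k) = v" "(z, s, k) \<in> flag_ideal n"
        using u v \<open>l = k\<close> by auto
      then show ?thesis
        by (blast intro: right_principal_memI)
    qed
  next
    case False
    then have "level_mult mult (x, r, k) v = v"
      using v \<open>l \<le> k\<close> by simp
    then show ?thesis
      using v by (blast intro: right_principal_memI)
  qed
qed

lemma R_rank_flag_ideal: "R_rank (flag_ideal n) (level_mult mult) flag_rank"
  unfolding R_rank_def
proof
  fix u assume "u \<in> flag_ideal n"
  then show "right_principal (flag_ideal n) (level_mult mult) u
      = {v \<in> flag_ideal n. flag_rank v \<le> flag_rank u}"
    by (cases u) (simp only: right_principal_flag_ideal)
qed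

lemma level_image: "(\<lambda>(x, r, k). k) ` levels n = {1..n}"
  using a_mem by (force simp: levels_def image_iff)

lemma flag_rank_image: "flag_rank ` flag_ideal n = {2..2 * n + 1}"
proof
  show "flag_rank ` flag_ideal n \<subseteq> {2..2 * n + 1}"
    by (auto simp: flag_ideal_def levels_def)
  show "{2..2 * n + 1} \<subseteq> flag_rank ` flag_ideal n"
  proof
    fix j assume "j \<in> {2..2 * n + 1}"
    then have "1 \<le> j div 2" "j div 2 \<le> n"
      by auto
    then have "(a, odd j, j div 2) \<in> flag_ideal n"
      using a_mem by (simp add: left_principal_def)
    moreover have "j = flag_rank (a, odd j, j div 2)"
      by simp
    ultimately show "j \<in> flag_rank ` flag_ideal n"
      by blast
  qed
qed

lemma countable_levels: "countable T \<Longrightarrow> countable (levels n)"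
  by (simp add: levels_def)

end

theorem corollary4p9:
  fixes n :: nat
  assumes "n > 0"
  shows "\<exists>(S :: nat set) (f :: nat \<Rightarrow> nat \<Rightarrow> nat) A.
           semigroup_on S f \<and> left_ideal S f A \<and>
           R_height S f = enat n \<and> R_height A f = enat (2 * n)"
proof -
  obtain T where T: "(*) 2 \<in> T" "T \<subseteq> baer_levi" "countable T" "semigroup_on T (\<lambda>x y. y \<circ> x)"
    "\<And>x y. x \<in> T \<Longrightarrow> y \<in> T \<Longrightarrow> \<exists>t\<in>T. t \<circ> x = y"
    using countable_right_simple_subsemigroup[OF semigroup_on_baer_levi baer_levi_right_simple
        double_mem_baer_levi] by metis
  interpret pointed_right_simple_semigroup T "\<lambda>x y. y \<circ> x" "(*) 2"
    using T comp_baer_levi_neq by unfold_locales (auto simp: subsetD)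
  let ?g = "level_mult (\<lambda>x y. y \<circ> x)"
  define h where "h = to_nat_on (levels n)"
  have inj: "inj_on h (levels n)"
    unfolding h_def using countable_levels[OF T(3)] by (rule inj_on_to_nat_on)
  let ?S = "h ` levels n" and ?A = "h ` flag_ideal n" and ?f = "induced_op (levels n) h ?g"
  show ?thesis
  proof (intro exI conjI)
    show "semigroup_on ?S ?f"
      using semigroup_on_induced[OF semigroup_levels inj] .
    show "left_ideal ?S ?f ?A"
      using left_ideal_induced[OF left_ideal_flag_ideal[OF assms] inj] .
    show "R_height ?S ?f = enat n"
      using R_height_induced[OF subset_refl inj R_rank_levels] level_image by simp
    show "R_height ?A ?f = enat (2 * n)"
      using R_height_induced[OF flag_ideal_subset inj R_rank_flag_ideal] flag_rank_image by simp
  qed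
qed

end
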